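(* Let $N\ge 1$, $m\ge 1$ and let $a_1,\dots,a_N$, $k_1,\dots,k_m$ be positive integers satisfying the Calabi--Yau condition $\sum_{i=1}^N a_i=\sum_{l=1}^m k_l$. Let $d\ge 2$, let $f$ be an integer with $1\le f\le d-1$, and let $\sigma=(d_1,\dots,d_l)$ with $d_1\le\cdots\le d_l$, $\sum_{i=1}^l d_i=d-f$, be a partition of $d-f$ (so that $(f,\sigma)$ determines a type (iii) graph $\Gamma$ of degree $d$). Let $f_\Gamma$ be the rational function in the variables $w$, $z_0$, $z_{i,j}$ ($1\le i\le l$, $1\le j\le d_i$), with the convention $z_{i,0}:=z_0$, given by \[ f_\Gamma=\frac{\mathrm{Sym}(\sigma)}{24\bigl(\prod_{i=1}^Na_i\bigr)^{d}(z_0)^{N(f-1)}} \Biggl( \prod_{i=1}^l\prod_{j=1}^{d_i}\frac{1}{(z_{i,j})^N}\Biggr)\left(-\frac{N-m}{N}\frac{1}{w^N}-\frac{N+m}{N}\frac{1}{(z_0)^N} \right) \] \[ \times \frac{1}{(w-z_0)^2\,q(w,z_0)\,(q(z_0,z_0))^{f-1}} \Biggl( \prod_{p=1}^m\frac{1}{(k_pz_0)^{l-1}}\,\frac{e_{k_p}(w,z_0)\, (e_{k_p}(z_0,z_0) )^{f-1}}{k_p w\, (k_p z_0 )^{f}} \Biggr) \Biggl( \prod_{i=1}^l\frac{\prod_{p=1}^me_{k_p}(z_0,z_{i,1})}{q(z_0,z_{i,1})(z_{i,1}-z_0)}\Biggr) \] \[ \times \prod_{i=1}^l\prod_{j=1}^{d_i-1}\frac{\prod_{p=1}^m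 e_{k_p}(z_{i,j},z_{i,j+1})}{q(z_{i,j},z_{i,j+1})\,(2z_{i,j}-z_{i,j-1}-z_{i,j+1})\,\prod_{p=1}^m k_pz_{i,j}} . \] Let $\mathrm{Res}(f_\Gamma)$ be the number obtained as follows: first take the residue in $w$ at $w=z_0$; then take the residue of the result in $z_0$ at $z_0=0$; then, for each $i$ (the order among different $i$ does not matter), for $j=1,2,\dots,d_i-1$ in ascending order, replace the current function by the sum of its residues in $z_{i,j}$ at $z_{i,j}=0$ and at $z_{i,j}=\frac{z_{i,j-1}+z_{i,j+1}}{2}$; finally take the residue in $z_{i,d_i}$ at $z_{i,d_i}=0$. Then $\mathrm{Res}(f_\Gamma)=0$.
   Context: Notation: $e_k(x,y):=\prod_{i=0}^k\bigl(ix+(k-i)y\bigr)$ and $q(x,y):=\prod_{i=1}^N\prod_{j=1}^{a_i-1}\bigl(jx+(a_i-j)y\bigr)$, where the inner product is $1$ when $a_i=1$. For a partition $\sigma=(d_1,\dots,d_l)$ of length $l$, $\mathrm{Sym}(\sigma):=\frac{(l-1)!}{\prod_{i}\mathrm{mul}(\sigma,i)!}$, where $\mathrm{mul}(\sigma,i)$ is the number of parts of $\sigma$ equal to $i$. This $f_\Gamma$ is the integrand attached, in the paper's definition of the elliptic virtual structure constant $w\bigl(\prod_a(\mathcal O_{h^a})^{n_a}\bigr)_{1,d}$ of the complete intersection of degrees $k_1,\dots,k_m$ in the weighted projective space $P(a_1,\dots,a_N)$, to the type (iii) graph consisting of a central cluster vertex of degree $f$ and a star attached to it given by $\sigma$;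 in the Calabi--Yau case the degree selection rule forces all insertion exponents $n_a$ with $a\ge 2$ to vanish, so the insertion factor $\prod_{a\ge2}(\cdots)^{n_a}$ of the general integrand equals $1$, which is the form written here. *)

theory Defs
  imports "HOL-Complex_Analysis.Complex_Analysis"
begin

definition ecy :: "nat \<Rightarrow> complex \<Rightarrow> complex \<Rightarrow> complex" where
  "ecy k x y = (\<Prod>i\<in>{0..k}. of_nat i * x + of_nat (k - i) * y)"

definition qcy :: "nat list \<Rightarrow> complex \<Rightarrow> complex \<Rightarrow> complex" where
  "qcy a x y = (\<Prod>i<length a. \<Prod>j\<in>{1..<a!i}. of_nat j * x + of_nat (a!i - j) * y)"

definition Sym :: "nat list \<Rightarrow> complex" where
  "Sym ds = of_nat (fact (length ds - 1)) / (\<Prod>i\<in>set ds. of_nat (fact (count_list ds i)))"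

text \<open>Variables: w, z0, and z_{i,j} = zz i j for chain index i < l (0-based) and 1 <= j <= d_i.
  Convention z_{i,0} := z0.\<close>
definition zv :: "complex \<Rightarrow> (nat \<Rightarrow> nat \<Rightarrow> complex) \<Rightarrow> nat \<Rightarrow> nat \<Rightarrow> complex" where
  "zv z0 zz i j = (if j = 0 then z0 else zz i j)"

definition fGamma :: "nat list \<Rightarrow> nat list \<Rightarrow> nat \<Rightarrow> nat \<Rightarrow> nat list \<Rightarrow>
    complex \<Rightarrow> complex \<Rightarrow> (nat \<Rightarrow> nat \<Rightarrow> complex) \<Rightarrow> complex" where
  "fGamma a k d f ds w z0 zz =
    (let N = length a; m = length k; l = length ds; z = zv z0 zz in
     Sym ds / (24 * (of_nat (\<Prod>i<N. a!i)) ^ d * z0 ^ (N * (f - 1)))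
     * (\<Prod>i<l. \<Prod>j\<in>{1..ds!i}. 1 / (z i j) ^ N)
     * (- ((of_nat N - of_nat m) / of_nat N) * (1 / w ^ N)
        - ((of_nat N + of_nat m) / of_nat N) * (1 / z0 ^ N))
     * (1 / ((w - z0)^2 * qcy a w z0 * (qcy a z0 z0) ^ (f - 1)))
     * (\<Prod>p<m. (1 / (of_nat (k!p) * z0) ^ (l - 1))
          * (ecy (k!p) w z0 * (ecy (k!p) z0 z0) ^ (f - 1)
             / (of_nat (k!p) * w * (of_nat (k!p) * z0) ^ f)))
     * (\<Prod>i<l. (\<Prod>p<m. ecy (k!p) z0 (z i 1)) / (qcy a z0 (z i 1) * (z i 1 - z0)))
     * (\<Prod>i<l. \<Prod>j\<in>{1..<ds!i}.
          (\<Prod>p<m. ecy (k!p) (z i j) (z i (j+1)))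
          / (qcy a (z i j) (z i (j+1)) * (2 * z i j - z i (j - 1) - z i (j+1))
             * (\<Prod>p<m. of_nat (k!p) * z i j))))"

definition updz :: "(nat \<Rightarrow> nat \<Rightarrow> complex) \<Rightarrow> nat \<Rightarrow> nat \<Rightarrow> complex \<Rightarrow> (nat \<Rightarrow> nat \<Rightarrow> complex)" where
  "updz zz i j u = zz(i := (zz i)(j := u))"

text \<open>Ratios t such that the point (z_{i,j-1}+z_{i,j+1})/2 equals t * z_{i,j+1}, once the
  already eliminated variable z_{i,j-1} is replaced by the point t' * z_{i,j} (t' in midRatios (j-1))
  at which its residue was taken (z_{i,0} = z0 was taken at 0).  The point 0 itself is ratio 0.\<close>
fun midRatios :: "nat \<Rightarrow> real set" where
  "midRatios 0 = {0}"
| "midRatios (Suc j) = {0} \<union> (\<lambda>t. 1 / (2 - t)) ` midRatios j"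

definition resWZ0 :: "nat list \<Rightarrow> nat list \<Rightarrow> nat \<Rightarrow> nat \<Rightarrow> nat list \<Rightarrow>
    (nat \<Rightarrow> nat \<Rightarrow> complex) \<Rightarrow> complex" where
  "resWZ0 a k d f ds zz =
     residue (\<lambda>z0. residue (\<lambda>w. fGamma a k d f ds w z0 zz) z0) 0"

definition midStep :: "nat \<Rightarrow> nat \<Rightarrow> ((nat \<Rightarrow> nat \<Rightarrow> complex) \<Rightarrow> complex)
    \<Rightarrow> ((nat \<Rightarrow> nat \<Rightarrow> complex) \<Rightarrow> complex)" where
  "midStep i j G = (\<lambda>zz. \<Sum>t\<in>midRatios j.
       residue (\<lambda>u. G (updz zz i j u)) (of_real t * zz i (j + 1)))"

definition lastStep :: "nat \<Rightarrow> nat \<Rightarrow> ((nat \<Rightarrow> nat \<Rightarrow> complex) \<Rightarrow> complex)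
    \<Rightarrow> ((nat \<Rightarrow> nat \<Rightarrow> complex) \<Rightarrow> complex)" where
  "lastStep i dd G = (\<lambda>zz. residue (\<lambda>u. G (updz zz i dd u)) 0)"

definition chainRes :: "nat \<Rightarrow> nat \<Rightarrow> ((nat \<Rightarrow> nat \<Rightarrow> complex) \<Rightarrow> complex)
    \<Rightarrow> ((nat \<Rightarrow> nat \<Rightarrow> complex) \<Rightarrow> complex)" where
  "chainRes i dd G = lastStep i dd (fold (midStep i) [1..<dd] G)"

text \<open>Res(f_Gamma): chains processed in the order i = 0, ..., l-1; after all variables are
  eliminated the value is evaluated at an arbitrary (here zero) assignment.\<close>
definition ResGamma :: "nat list \<Rightarrow> nat list \<Rightarrow> nat \<Rightarrow> nat \<Rightarrow> nat list \<Rightarrow> complex" where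
  "ResGamma a k d f ds =
     fold (\<lambda>i G. chainRes i (ds!i) G) [0..<length ds] (resWZ0 a k d f ds) (\<lambda>_ _. 0)"

end

theory Submission
  imports Defs
begin

text \<open>Only the residue in \<open>w\<close> matters. As a function of \<open>w\<close>, \<open>f\<^sub>\<Gamma>\<close> is
  \<open>K \<cdot> g(w) / (w - z\<^sub>0)\<^sup>2\<close>, where \<open>g\<close> is a product of factors whose logarithmic derivatives
  at \<open>w = z\<^sub>0\<close> are explicit: summing them gives \<open>(\<Sum>k\<^sub>p - \<Sum>a\<^sub>i) / (2 z\<^sub>0)\<close>, which the
  Calabi--Yau condition makes zero. Hence \<open>g'(z\<^sub>0) = 0\<close>, the residue in \<open>w\<close> vanishes for every
  \<open>z\<^sub>0 \<noteq> 0\<close>, and all subsequent residues are residues of the zero function.\<close>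

definition has_log_derivative :: "('a::real_normed_field \<Rightarrow> 'a) \<Rightarrow> 'a \<Rightarrow> 'a \<Rightarrow> bool" where
  "has_log_derivative f L z \<longleftrightarrow> (f has_field_derivative L * f z) (at z)"

lemma has_log_derivative_mult:
  assumes "has_log_derivative f L z" "has_log_derivative g M z"
  shows "has_log_derivative (\<lambda>w. f w * g w) (L + M) z"
  using DERIV_mult[OF assms[unfolded has_log_derivative_def]]
  by (simp add: has_log_derivative_def algebra_simps)

lemma has_log_derivative_inverse:
  assumes "has_log_derivative f L z" "f z \<noteq> 0"
  shows "has_log_derivative (\<lambda>w. inverse (f w)) (- L) z"
  using DERIV_inverse_fun[OF assms(1)[unfolded has_log_derivative_def] assms(2)] assms(2)
  by (simp add: has_log_derivative_def field_simps)

lemma has_log_derivative_prod: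
  assumes "finite I" "\<And>i. i \<in> I \<Longrightarrow> has_log_derivative (F i) (L i) z"
  shows "has_log_derivative (\<lambda>w. \<Prod>i\<in>I. F i w) (\<Sum>i\<in>I. L i) z"
  using assms
proof (induction I rule: finite_induct)
  case empty
  then show ?case by (simp add: has_log_derivative_def)
next
  case (insert x I)
  then have "has_log_derivative (\<lambda>w. F x w * (\<Prod>i\<in>I. F i w)) (L x + (\<Sum>i\<in>I. L i)) z"
    by (intro has_log_derivative_mult) auto
  with insert show ?case by simp
qed

lemma has_log_derivative_linear:
  assumes "c * z + b \<noteq> 0"
  shows "has_log_derivative (\<lambda>w. c * w + b) (c / (c * z + b)) z"
  unfolding has_log_derivative_def using assms
  by (auto intro!: derivative_eq_intros)

lemma has_log_derivative_power:
  assumes "z \<noteq> 0"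
  shows "has_log_derivative (\<lambda>w. w ^ n) (of_nat n / z) z"
  using has_log_derivative_prod[of "{..<n}" "\<lambda>_ w. 1 * w + 0" "\<lambda>_. 1 / z" z]
    has_log_derivative_linear[of 1 z 0] assms
  by (simp add: divide_inverse)

lemma has_log_derivative_weighted_linear_prod:
  fixes z :: "'a::real_normed_field"
  assumes "J \<subseteq> {0..n}" "n > 0" "z \<noteq> 0"
  shows "has_log_derivative (\<lambda>w. \<Prod>j\<in>J. of_nat j * w + of_nat (n - j) * z)
           ((\<Sum>j\<in>J. of_nat j) / (of_nat n * z)) z"
proof -
  have "has_log_derivative (\<lambda>w. of_nat j * w + of_nat (n - j) * z) (of_nat j / (of_nat n * z)) z"
    if "j \<in> J" for j
  proof -
    have "of_nat j * z + of_nat (n - j) * z = of_nat n * z"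
      using that assms(1) by (auto simp: of_nat_diff algebra_simps)
    then show ?thesis
      using has_log_derivative_linear[of "of_nat j" z "of_nat (n - j) * z"] assms(2,3) by simp
  qed
  then have "has_log_derivative (\<lambda>w. \<Prod>j\<in>J. of_nat j * w + of_nat (n - j) * z)
               (\<Sum>j\<in>J. of_nat j / (of_nat n * z)) z"
    using finite_subset[OF assms(1)] by (intro has_log_derivative_prod) auto
  then show ?thesis by (simp add: sum_divide_distrib)
qed

lemma ecy_has_log_derivative:
  assumes "n > 0" "z \<noteq> 0"
  shows "has_log_derivative (\<lambda>w. ecy n w z) ((of_nat n + 1) / (2 * z)) z"
proof -
  have "(\<Sum>j\<in>{0..n}. of_nat j) / (of_nat n * z) = ((of_nat n + 1) / (2 * z) :: complex)"
    using assms double_gauss_sum[of n, where 'a = complex] by (simp add: field_simps)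
  then show ?thesis
    unfolding ecy_def
    using has_log_derivative_weighted_linear_prod[of "{0..n}" n z] assms by simp
qed

lemma qcy_has_log_derivative:
  assumes "\<forall>x\<in>set a. x > 0" "z \<noteq> 0"
  shows "has_log_derivative (\<lambda>w. qcy a w z)
           ((of_nat (sum_list a) - of_nat (length a)) / (2 * z)) z"
proof -
  have factor: "has_log_derivative (\<lambda>w. \<Prod>j\<in>{1..<a!i}. of_nat j * w + of_nat (a!i - j) * z)
                  ((of_nat (a!i) - 1) / (2 * z)) z" if "i < length a" for i
  proof -
    have pos: "a!i > 0" using assms that by auto
    then obtain n where n: "a!i = Suc n" using gr0_conv_Suc by blast
    have gauss: "(\<Sum>j\<in>{1..<a!i}. of_nat j) = (of_nat n * of_nat (a!i) / 2 :: complex)"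
      unfolding n using double_gauss_sum_from_Suc_0[of n] atLeastLessThanSuc_atLeastAtMost
      by (simp add: field_simps)
    have pred: "of_nat (a!i) - 1 = (of_nat n :: complex)" by (simp add: n)
    have "of_nat (a!i) \<noteq> (0 :: complex)" unfolding n by (rule of_nat_neq_0)
    then have "(\<Sum>j\<in>{1..<a!i}. of_nat j) / (of_nat (a!i) * z) = ((of_nat (a!i) - 1) / (2 * z) :: complex)"
      unfolding gauss pred using assms(2) by (simp add: field_simps)
    moreover have "{1..<a!i} \<subseteq> {0..a!i}" by auto
    ultimately show ?thesis
      using has_log_derivative_weighted_linear_prod[of "{1..<a!i}" "a!i" z] pos assms(2) by simp
  qed
  have "has_log_derivative (\<lambda>w. qcy a w z) (\<Sum>i<length a. (of_nat (a!i) - 1) / (2 * z)) z"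
    unfolding qcy_def by (rule has_log_derivative_prod) (simp_all only: finite_lessThan lessThan_iff factor)
  moreover have "(\<Sum>i<length a. (of_nat (a!i) - 1) / (2 * z))
        = ((of_nat (sum_list a) - of_nat (length a)) / (2 * z) :: complex)"
    by (simp add: sum_divide_distrib[symmetric] sum_subtractf sum_list_sum_nth lessThan_atLeast0)
  ultimately show ?thesis by simp
qed

lemma has_log_derivative_inverse_power_combination:
  fixes c z :: complex
  assumes "N > 0" "z \<noteq> 0"
  shows "has_log_derivative
           (\<lambda>w. - ((of_nat N - c) / of_nat N) * (1 / w ^ N) - ((of_nat N + c) / of_nat N) * (1 / z ^ N))
           (- (of_nat N - c) / (2 * z)) z"
proof -
  have "((\<lambda>w. 1 / w ^ N) has_field_derivative (- (of_nat N / z)) * (1 / z ^ N)) (at z)"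
    using has_log_derivative_inverse[OF has_log_derivative_power[OF assms(2), of N]] assms(2)
    by (simp add: has_log_derivative_def inverse_eq_divide)
  then have "((\<lambda>w. - ((of_nat N - c) / of_nat N) * (1 / w ^ N) - ((of_nat N + c) / of_nat N) * (1 / z ^ N))
          has_field_derivative - ((of_nat N - c) / of_nat N) * ((- (of_nat N / z)) * (1 / z ^ N)) - 0) (at z)"
    by (intro DERIV_diff DERIV_cmult DERIV_const)
  moreover have "- ((of_nat N - c) / of_nat N) * ((- (of_nat N / z)) * (1 / z ^ N)) - 0
    = (- (of_nat N - c) / (2 * z)) * (- ((of_nat N - c) / of_nat N) * (1 / z ^ N) - ((of_nat N + c) / of_nat N) * (1 / z ^ N))"
    using assms by (simp add: field_simps)
  ultimately show ?thesis unfolding has_log_derivative_def by (simp only:)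
qed

lemma qcy_diagonal_nonzero:
  assumes "\<forall>x\<in>set a. x > 0" "z \<noteq> 0"
  shows "qcy a z z \<noteq> 0"
  unfolding qcy_def using assms by (auto simp: of_nat_diff algebra_simps)

definition fGamma_w_factor :: "nat list \<Rightarrow> nat list \<Rightarrow> complex \<Rightarrow> complex \<Rightarrow> complex" where
  "fGamma_w_factor a k z w =
     (- ((of_nat (length a) - of_nat (length k)) / of_nat (length a)) * (1 / w ^ length a)
      - ((of_nat (length a) + of_nat (length k)) / of_nat (length a)) * (1 / z ^ length a))
     * inverse (qcy a w z) * (\<Prod>p<length k. ecy (k!p) w z * inverse w)"

lemma fGamma_w_factor_has_log_derivative_zero:
  assumes "a \<noteq> []" "\<forall>x\<in>set a. x > 0" "\<forall>x\<in>set k. x > 0"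
    and "sum_list a = sum_list k" "z \<noteq> 0"
  shows "has_log_derivative (fGamma_w_factor a k z) 0 z"
proof -
  let ?N = "of_nat (length a) :: complex" and ?m = "of_nat (length k) :: complex"
  have inverse_id: "has_log_derivative (\<lambda>w. inverse w) (- (1 / z)) z"
    using has_log_derivative_inverse[OF has_log_derivative_power[OF assms(5), of 1]] assms(5) by simp
  have ecy_factors: "has_log_derivative (\<lambda>w. \<Prod>p<length k. ecy (k!p) w z * inverse w)
                       (\<Sum>p<length k. (of_nat (k!p) + 1) / (2 * z) + - (1 / z)) z"
    using assms(3,5) by (intro has_log_derivative_prod has_log_derivative_mult
        ecy_has_log_derivative inverse_id) auto
  have "has_log_derivative (fGamma_w_factor a k z)
          (- (?N - ?m) / (2 * z) + - ((of_nat (sum_list a) - ?N) / (2 * z))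
           + (\<Sum>p<length k. (of_nat (k!p) + 1) / (2 * z) + - (1 / z))) z"
    unfolding fGamma_w_factor_def
    using assms qcy_diagonal_nonzero
    by (intro has_log_derivative_mult has_log_derivative_inverse ecy_factors
        has_log_derivative_inverse_power_combination qcy_has_log_derivative) auto
  moreover have "(\<Sum>p<length k. (of_nat (k!p) + 1) / (2 * z) + - (1 / z))
                 = (of_nat (sum_list k) - ?m) / (2 * z)"
  proof -
    have "(\<Sum>p<length k. (of_nat (k!p) + 1) / (2 * z) + - (1 / z))
          = (\<Sum>p<length k. (of_nat (k!p) - 1) / (2 * z))"
      using assms(5) by (intro sum.cong) (simp_all add: field_simps)
    then show ?thesis
      by (simp add: sum_divide_distrib[symmetric] sum_subtractf sum_list_sum_nth lessThan_atLeast0)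
  qed
  moreover have "- (?N - ?m) / (2 * z) + - ((of_nat (sum_list a) - ?N) / (2 * z))
                 + (of_nat (sum_list k) - ?m) / (2 * z) = 0"
    unfolding assms(4) using assms(5) by (simp add: field_simps)
  ultimately show ?thesis by simp
qed

lemma fGamma_eq_w_factor_over_square:
  "\<exists>K. \<forall>w. fGamma a k d f ds w z0 zz = K * fGamma_w_factor a k z0 w / (w - z0) ^ 2"
proof -
  have regroup: "S * P * X * (1 / ((w - z0) ^ 2 * q * q0)) * R * C * C'
      = (S * P * inverse q0 * Rc * C * C') * (X * inverse q * Rw) / (w - z0) ^ 2"
    if "R = Rc * Rw" for S P X w q q0 R Rc Rw C C' :: complex
    using that by (simp add: divide_inverse inverse_mult_distrib mult_ac)
  have split_prod: "(\<Prod>p\<in>I. A p * (E p * B p / (c p * w * D p)))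
      = (\<Prod>p\<in>I. A p * (B p / (c p * D p))) * (\<Prod>p\<in>I. E p * inverse w)"
    for I :: "nat set" and A E B c D :: "nat \<Rightarrow> complex" and w
    unfolding prod.distrib[symmetric]
    by (rule prod.cong) (simp_all add: divide_inverse inverse_mult_distrib mult_ac)
  show ?thesis
    unfolding fGamma_def Let_def fGamma_w_factor_def
    \<comment> \<open>\<open>K\<close> is instantiated by unification with the right-hand side of \<open>regroup\<close>\<close>
    by (rule exI, rule allI, rule regroup, rule split_prod)
qed

lemma residue_over_square:
  assumes "open A" "z \<in> A" "g holomorphic_on A"
  shows "residue (\<lambda>w. g w / (w - z) ^ 2) z = deriv g z"
  using residue_holomorphic_over_power[OF assms, of 1] by (simp add: numeral_2_eq_2)

lemma residue_fGamma_at_w_eq_z0: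
  assumes "a \<noteq> []" "\<forall>x\<in>set a. x > 0" "\<forall>x\<in>set k. x > 0"
    and "sum_list a = sum_list k" "z0 \<noteq> 0"
  shows "residue (\<lambda>w. fGamma a k d f ds w z0 zz) z0 = 0"
proof -
  obtain K where K: "\<And>w. fGamma a k d f ds w z0 zz = K * fGamma_w_factor a k z0 w / (w - z0) ^ 2"
    using fGamma_eq_w_factor_over_square by blast
  define A where "A = {w. w \<noteq> 0} \<inter> {w. qcy a w z0 \<noteq> 0}"
  have "open A"
    unfolding A_def qcy_def by (intro open_Int open_Collect_neq continuous_intros)
  moreover have "z0 \<in> A"
    unfolding A_def using assms qcy_diagonal_nonzero by auto
  moreover have "(\<lambda>w. K * fGamma_w_factor a k z0 w) holomorphic_on A"
    unfolding A_def fGamma_w_factor_def qcy_def ecy_def by (intro holomorphic_intros) auto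
  ultimately have "residue (\<lambda>w. fGamma a k d f ds w z0 zz) z0 = deriv (\<lambda>w. K * fGamma_w_factor a k z0 w) z0"
    unfolding K by (rule residue_over_square)
  also have "\<dots> = K * 0"
    using fGamma_w_factor_has_log_derivative_zero[OF assms]
    by (intro DERIV_imp_deriv DERIV_cmult) (simp add: has_log_derivative_def)
  finally show ?thesis by simp
qed

lemma resWZ0_eq_0:
  assumes "a \<noteq> []" "\<forall>x\<in>set a. x > 0" "\<forall>x\<in>set k. x > 0" "sum_list a = sum_list k"
  shows "resWZ0 a k d f ds = (\<lambda>_. 0)"
proof
  fix zz
  have "\<forall>\<^sub>F z0 in at 0. residue (\<lambda>w. fGamma a k d f ds w z0 zz) z0 = 0"
    using residue_fGamma_at_w_eq_z0[OF assms] by (auto simp: eventually_at_filter)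
  then have "resWZ0 a k d f ds zz = residue (\<lambda>_. 0) 0"
    unfolding resWZ0_def by (rule residue_cong) simp
  then show "resWZ0 a k d f ds zz = 0" by (simp add: residue_const)
qed

lemma fold_midStep_zero: "fold (midStep i) js (\<lambda>_. 0) = (\<lambda>_. 0)"
  by (induction js) (simp_all add: midStep_def residue_const)

lemma chainRes_zero: "chainRes i dd (\<lambda>_. 0) = (\<lambda>_. 0)"
  by (simp add: chainRes_def fold_midStep_zero lastStep_def residue_const)

lemma fold_chainRes_zero: "fold (\<lambda>i G. chainRes i (ds!i) G) is (\<lambda>_. 0) = (\<lambda>_. 0)"
  by (induction "is") (simp_all add: chainRes_zero)

theorem proposition1:
  fixes a k ds :: "nat list" and d f :: nat
  assumes "length a \<ge> 1" and "length k \<ge> 1"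
    and "\<forall>x\<in>set a. x > 0" and "\<forall>x\<in>set k. x > 0"
    and "sum_list a = sum_list k"
    and "d \<ge> 2" and "1 \<le> f" and "f \<le> d - 1"
    and "sorted ds" and "\<forall>x\<in>set ds. x > 0" and "sum_list ds = d - f"
  shows "ResGamma a k d f ds = 0"
proof -
  have "a \<noteq> []" using assms(1) by auto
  then have "resWZ0 a k d f ds = (\<lambda>_. 0)"
    using assms(3-5) by (rule resWZ0_eq_0)
  then show ?thesis
    unfolding ResGamma_def by (simp add: fold_chainRes_zero)
qed

end
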